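(* Let $N_p\ge1$ be an integer and $F,G\in\mathbb{C}$ with $|G|<1$ and $|G-F|<1/N_p$. Define the $(N_p+1)\times(N_p+1)$ lower bidiagonal matrices $\mathbf{M}_F$, $\mathbf{M}_G$ with all diagonal entries $1$, subdiagonal entries $-F$ (respectively $-G$), and all other entries zero, and let $\mathbf{E}=\mathbf{I}-\mathbf{M}_G^{-1}\mathbf{M}_F$. Then $\|\mathbf{E}\|_\infty<1$; consequently the Parareal error iteration $\mathbf{e}^{k}=\mathbf{E}\mathbf{e}^{k-1}$ satisfies $\|\mathbf{e}^{k}\|_\infty<\|\mathbf{e}^{k-1}\|_\infty$ whenever $\mathbf{e}^{k-1}\neq 0$.
   Context: $\mathbf{E}$ is the error-propagation matrix of the Parareal iteration applied to a scalar linear ODE, where $F$ and $G$ are the complex amplification factors of the fine and coarse propagators over one processor interval and $N_p$ is the number of processors. $\|\cdot\|_\infty$ denotes the vector $\infty$-norm and its induced matrix norm. *)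

theory Defs
  imports Complex_Main "Jordan_Normal_Form.Gauss_Jordan_Elimination"
begin

definition bidiag :: "nat \<Rightarrow> complex \<Rightarrow> complex mat" where
  "bidiag n a = mat (n+1) (n+1)
     (\<lambda>(i,j). if i = j then 1 else if i = j + 1 then - a else 0)"

definition parareal_E :: "nat \<Rightarrow> complex \<Rightarrow> complex \<Rightarrow> complex mat" where
  "parareal_E n F G = 1\<^sub>m (n+1) - the (mat_inverse (bidiag n G)) * bidiag n F"

definition vec_inf_norm :: "complex vec \<Rightarrow> real" where
  "vec_inf_norm v = Max (insert 0 {cmod (v $ i) | i. i < dim_vec v})"

definition mat_inf_norm :: "complex mat \<Rightarrow> real" where
  "mat_inf_norm A = Sup {vec_inf_norm (A *\<^sub>v v) / vec_inf_norm v | v.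
       v \<in> carrier_vec (dim_col A) \<and> v \<noteq> 0\<^sub>v (dim_col A)}"

end

theory Submission imports Defs "Jordan_Normal_Form.Determinant" begin

text \<open>The product \<open>M_G\<^sup>-\<^sup>1 M_F\<close> is known in closed form: it is unit lower triangular with
  entry \<open>(G - F) G^(i-j-1)\<close> below the diagonal. Hence \<open>E\<close> is strictly lower triangular and,
  since \<open>|G| \<le> 1\<close>, each of its entries has modulus at most \<open>|G - F|\<close>. A row of \<open>E\<close> has at
  most \<open>N_p\<close> nonzero entries, so \<open>|E e|_\<infinity> \<le> N_p |G - F| |e|_\<infinity>\<close> with \<open>N_p |G - F| < 1\<close>.\<close>

lemma bidiag_carrier: "bidiag n a \<in> carrier_mat (n+1) (n+1)"
  unfolding bidiag_def by auto

lemma bidiag_mult_index: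
  assumes X: "X \<in> carrier_mat (n+1) m" and i: "i < n+1" and j: "j < m"
  shows "(bidiag n a * X) $$ (i,j) = X $$ (i,j) - (if i > 0 then a * X $$ (i-1,j) else 0)"
proof -
  have "(bidiag n a * X) $$ (i,j) =
      (\<Sum>k\<in>{0..<n+1}. (if i = k then 1 else if i = k + 1 then - a else 0) * X $$ (k,j))"
    using X i j unfolding bidiag_def by (auto simp: scalar_prod_def)
  also have "\<dots> = (\<Sum>k\<in>{0..<n+1}. (if k = i then X $$ (k,j) else 0)
                                 + (if k = i - 1 \<and> i > 0 then - a * X $$ (k,j) else 0))"
    by (rule sum.cong) auto
  also have "\<dots> = X $$ (i,j) - (if i > 0 then a * X $$ (i-1,j) else 0)"
    using i unfolding sum.distrib by (cases "i > 0") (auto simp: sum.delta')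
  finally show ?thesis .
qed

lemma det_bidiag: "det (bidiag n a) = 1"
proof -
  have "det (bidiag n a) = prod_list (diag_mat (bidiag n a))"
    by (rule det_lower_triangular[OF _ bidiag_carrier]) (auto simp: bidiag_def)
  then show ?thesis unfolding prod_list_diag_prod by (simp add: bidiag_def)
qed

definition bidiag_quotient :: "nat \<Rightarrow> complex \<Rightarrow> complex \<Rightarrow> complex mat" where
  "bidiag_quotient n F G = mat (n+1) (n+1)
     (\<lambda>(i,j). if i = j then 1 else if j < i then (G - F) * G^(i-j-1) else 0)"

lemma bidiag_quotient_carrier: "bidiag_quotient n F G \<in> carrier_mat (n+1) (n+1)"
  unfolding bidiag_quotient_def by auto

lemma bidiag_mult_bidiag_quotient: "bidiag n G * bidiag_quotient n F G = bidiag n F"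
proof (rule eq_matI)
  fix i j assume "i < dim_row (bidiag n F)" and "j < dim_col (bidiag n F)"
  then have i: "i < n+1" and j: "j < n+1" by (auto simp: bidiag_def)
  have Q: "bidiag_quotient n F G $$ (k,j) =
      (if k = j then 1 else if j < k then (G - F) * G^(k-j-1) else 0)" if "k < n+1" for k
    using that j by (simp add: bidiag_quotient_def)
  have M: "bidiag n F $$ (i,j) = (if i = j then 1 else if i = j + 1 then - F else 0)"
    using i j by (simp add: bidiag_def)
  consider "i = 0" | "0 < i" "j + 1 < i" | "0 < i" "j + 1 = i" | "0 < i" "i \<le> j" by linarith
  then show "(bidiag n G * bidiag_quotient n F G) $$ (i,j) = bidiag n F $$ (i,j)"
  proof cases
    case 2
    then have "j < i - 1" "i - j - 1 = Suc (i - 1 - j - 1)" by simp_all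
    with 2 i show ?thesis
      unfolding bidiag_mult_index[OF bidiag_quotient_carrier i j] M
      by (simp add: Q algebra_simps del: Suc_diff_Suc)
  next
    case 3
    with i show ?thesis
      unfolding bidiag_mult_index[OF bidiag_quotient_carrier i j] M by (simp add: Q)
  next
    case 4
    then have "\<not> j < i - 1" "i - 1 \<noteq> j" by simp_all
    with 4 i show ?thesis
      unfolding bidiag_mult_index[OF bidiag_quotient_carrier i j] M by (simp add: Q)
  qed (unfold bidiag_mult_index[OF bidiag_quotient_carrier i j] M, simp_all add: i Q)
qed (auto simp: bidiag_def bidiag_quotient_def)

lemma parareal_E_eq: "parareal_E n F G = 1\<^sub>m (n+1) - bidiag_quotient n F G"
proof -
  let ?M = "bidiag n G" and ?X = "bidiag_quotient n F G"
  have M: "?M \<in> carrier_mat (n+1) (n+1)" by (rule bidiag_carrier)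
  from det_non_zero_imp_unit[OF M] mat_inverse(1)[OF M] det_bidiag
  obtain B where B: "mat_inverse ?M = Some B" by fastforce
  from mat_inverse(2)[OF M B] have BM: "B * ?M = 1\<^sub>m (n+1)" and Bc: "B \<in> carrier_mat (n+1) (n+1)"
    by auto
  have "B * bidiag n F = B * (?M * ?X)" by (simp only: bidiag_mult_bidiag_quotient)
  also have "\<dots> = (B * ?M) * ?X" using Bc M bidiag_quotient_carrier by (metis assoc_mult_mat)
  also have "\<dots> = ?X" using BM left_mult_one_mat[OF bidiag_quotient_carrier] by simp
  finally show ?thesis unfolding parareal_E_def B by simp
qed

lemma parareal_E_carrier: "parareal_E n F G \<in> carrier_mat (n+1) (n+1)"
  unfolding parareal_E_eq bidiag_quotient_def by auto

lemma norm_parareal_E_index_le: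
  assumes "cmod G \<le> 1" and "i < n+1" and "j < n+1"
  shows "cmod (parareal_E n F G $$ (i,j)) \<le> (if j < i then cmod (G - F) else 0)"
proof -
  have "cmod (G^(i-j-1)) \<le> 1" using assms(1) by (simp add: norm_power power_le_one)
  then have "cmod ((G - F) * G^(i-j-1)) \<le> cmod (G - F)"
    by (simp add: norm_mult mult_left_le)
  with assms(2,3) show ?thesis unfolding parareal_E_eq by (auto simp: bidiag_quotient_def)
qed

lemma vec_inf_norm_nonneg: "0 \<le> vec_inf_norm v"
  unfolding vec_inf_norm_def by (rule Max_ge) auto

lemma norm_index_le_vec_inf_norm: "i < dim_vec v \<Longrightarrow> cmod (v $ i) \<le> vec_inf_norm v"
  unfolding vec_inf_norm_def by (rule Max_ge) auto

lemma vec_inf_norm_le: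
  "0 \<le> b \<Longrightarrow> (\<And>i. i < dim_vec v \<Longrightarrow> cmod (v $ i) \<le> b) \<Longrightarrow> vec_inf_norm v \<le> b"
  unfolding vec_inf_norm_def by (subst Max_le_iff) auto

lemma vec_inf_norm_pos:
  assumes "v \<in> carrier_vec n" and "v \<noteq> 0\<^sub>v n"
  shows "0 < vec_inf_norm v"
proof -
  obtain i where i: "i < n" "v $ i \<noteq> 0"
    using assms by (metis eq_vecI carrier_vecD index_zero_vec(1,2))
  then have "0 < cmod (v $ i)" by simp
  also have "\<dots> \<le> vec_inf_norm v" using i assms by (intro norm_index_le_vec_inf_norm) auto
  finally show ?thesis .
qed

lemma vec_inf_norm_strictly_lower_mult_le:
  assumes A: "A \<in> carrier_mat (n+1) (n+1)" and v: "v \<in> carrier_vec (n+1)" and "0 \<le> d"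
    and entries: "\<And>i j. i < n+1 \<Longrightarrow> j < n+1 \<Longrightarrow> cmod (A $$ (i,j)) \<le> (if j < i then d else 0)"
  shows "vec_inf_norm (A *\<^sub>v v) \<le> real n * d * vec_inf_norm v"
proof (rule vec_inf_norm_le)
  let ?N = "vec_inf_norm v"
  show "0 \<le> real n * d * ?N" using \<open>0 \<le> d\<close> vec_inf_norm_nonneg by simp
  fix i assume "i < dim_vec (A *\<^sub>v v)"
  then have i: "i < n+1" using A by simp
  have "cmod ((A *\<^sub>v v) $ i) = cmod (\<Sum>j\<in>{0..<n+1}. A $$ (i,j) * v $ j)"
    using A v i by (auto simp: scalar_prod_def)
  also have "\<dots> \<le> (\<Sum>j\<in>{0..<n+1}. cmod (A $$ (i,j)) * cmod (v $ j))"
    by (metis (no_types, lifting) norm_mult norm_sum sum.cong)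
  also have "\<dots> \<le> (\<Sum>j\<in>{0..<n+1}. if j < i then d * ?N else 0)"
  proof (rule sum_mono)
    fix j assume "j \<in> {0..<n+1}"
    then have "cmod (A $$ (i,j)) * cmod (v $ j) \<le> (if j < i then d else 0) * ?N"
      using entries[OF i] v norm_index_le_vec_inf_norm[of j v] \<open>0 \<le> d\<close>
      by (intro mult_mono) auto
    then show "cmod (A $$ (i,j)) * cmod (v $ j) \<le> (if j < i then d * ?N else 0)"
      by (simp split: if_splits)
  qed
  also have "\<dots> = (\<Sum>j\<in>{0..<i}. d * ?N)"
    using i by (intro sum.mono_neutral_cong_right) auto
  also have "\<dots> = real i * d * ?N" by simp
  also have "\<dots> \<le> real n * d * ?N"
    using i \<open>0 \<le> d\<close> vec_inf_norm_nonneg[of v] by (intro mult_right_mono) auto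
  finally show "cmod ((A *\<^sub>v v) $ i) \<le> real n * d * ?N" .
qed

lemma mat_inf_norm_le:
  assumes "0 < dim_col A"
    and bound: "\<And>v. v \<in> carrier_vec (dim_col A) \<Longrightarrow> v \<noteq> 0\<^sub>v (dim_col A) \<Longrightarrow>
                   vec_inf_norm (A *\<^sub>v v) \<le> c * vec_inf_norm v"
  shows "mat_inf_norm A \<le> c"
proof -
  let ?n = "dim_col A"
  let ?S = "{vec_inf_norm (A *\<^sub>v v) / vec_inf_norm v | v. v \<in> carrier_vec ?n \<and> v \<noteq> 0\<^sub>v ?n}"
  let ?u = "unit_vec ?n 0 :: complex vec"
  have "?u $ 0 \<noteq> 0\<^sub>v ?n $ 0" using assms(1) by simp
  then have "?u \<noteq> 0\<^sub>v ?n" by metis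
  then have "vec_inf_norm (A *\<^sub>v ?u) / vec_inf_norm ?u \<in> ?S" by fastforce
  then have "?S \<noteq> {}" by blast
  moreover have "x \<le> c" if "x \<in> ?S" for x
  proof -
    from that obtain v where v: "v \<in> carrier_vec ?n" "v \<noteq> 0\<^sub>v ?n"
      and x: "x = vec_inf_norm (A *\<^sub>v v) / vec_inf_norm v" by blast
    show "x \<le> c" unfolding x using bound[OF v] vec_inf_norm_pos[OF v]
      by (simp add: pos_divide_le_eq)
  qed
  ultimately show ?thesis unfolding mat_inf_norm_def by (rule cSup_least)
qed

theorem mainTheorem5:
  fixes Np :: nat and F G :: complex
  assumes "Np \<ge> 1" and "cmod G < 1" and "cmod (G - F) < 1 / real Np"
  shows "mat_inf_norm (parareal_E Np F G) < 1 \<and>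
    (\<forall>e \<in> carrier_vec (Np+1). e \<noteq> 0\<^sub>v (Np+1) \<longrightarrow>
        vec_inf_norm (parareal_E Np F G *\<^sub>v e) < vec_inf_norm e)"
proof -
  let ?E = "parareal_E Np F G" and ?c = "real Np * cmod (G - F)"
  have c: "?c < 1" using assms(1,3) by (simp add: field_simps)
  have bound: "vec_inf_norm (?E *\<^sub>v v) \<le> ?c * vec_inf_norm v" if "v \<in> carrier_vec (Np+1)" for v
    using vec_inf_norm_strictly_lower_mult_le[OF parareal_E_carrier that _ norm_parareal_E_index_le]
      assms(2) by simp
  have "mat_inf_norm ?E \<le> ?c"
    using bound by (intro mat_inf_norm_le) (simp_all add: parareal_E_carrier[THEN carrier_matD(2)])
  moreover have "vec_inf_norm (?E *\<^sub>v e) < vec_inf_norm e"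
    if "e \<in> carrier_vec (Np+1)" "e \<noteq> 0\<^sub>v (Np+1)" for e
  proof -
    have "vec_inf_norm (?E *\<^sub>v e) \<le> ?c * vec_inf_norm e" using bound[OF that(1)] .
    also have "\<dots> < vec_inf_norm e" using c vec_inf_norm_pos[OF that] by simp
    finally show ?thesis .
  qed
  ultimately show ?thesis using c by auto
qed

end
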